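(* Let $X$ be a real vector space, $n\ge 2$, and let $(\cdot,\cdot\mid\cdot,\ldots,\cdot)$ be a weak $n$-inner product on $X$. Fix $x_2,\ldots,x_n\in X$, let $Y=\mathrm{span}\{x_2,\ldots,x_n\}$ and let $X/Y=\{\hat x: x\in X\}$ be the quotient space, where $\hat x=\{u\in X: u-x\in Y\}$. Then the function $\psi:(X/Y)^2\to\mathbb{R}$, $\psi(\hat x,\hat y):=(x,y\mid x_n,\ldots,x_2)$, is well defined and is a semi-inner product on $X/Y$. Moreover, if $x_2,\ldots,x_n$ are linearly independent, then $\psi$ is an inner product on $X/Y$.
   Context: A weak $n$-inner product ($n\ge2$) on a real vector space $X$ is a function $(\cdot,\cdot\mid\cdot,\ldots,\cdot):X^{n+1}\to\mathbb{R}$, written $(x,y\mid x_n,\ldots,x_2)$, such that for all $x,x',y,x_2,\ldots,x_n\in X$ and $\alpha\in\mathbb{R}$: (P1) $(x,x\mid x_n,\ldots,x_2)\ge 0$, with equality if and only if $x,x_2,\ldots,x_n$ are linearly dependent; (P2) $(x,x\mid x_n,\ldots,x_2)=(x_n,x_n\mid x,x_{n-1},\ldots,x_2)$; (P3) $(x,y\mid x_n,\ldots,x_2)=(y,x\mid x_n,\ldots,x_2)$; (P4) $(\alpha x,y\mid x_n,\ldots,x_2)=\alpha(x,y\mid x_n,\ldots,x_2)$; (P5) $(x+x',y\mid x_n,\ldots,x_2)=(x,y\mid x_n,\ldots,x_2)+(x',y\mid x_n,\ldots,x_2)$. A semi-inner product is a symmetric bilinear form $\psi$ with $\psi(v,v)\ge0$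 for all $v$. *)

theory Defs
  imports "HOL-Analysis.Analysis"
begin

text \<open>A finite family (given as a list) is linearly dependent if some nontrivial
  linear combination of its members vanishes (repetitions count separately).\<close>
definition lin_dep_list :: "'a::real_vector list \<Rightarrow> bool" where
  "lin_dep_list vs \<longleftrightarrow>
     (\<exists>c::nat \<Rightarrow> real. (\<exists>i<length vs. c i \<noteq> 0) \<and> (\<Sum>i<length vs. c i *\<^sub>R vs ! i) = 0)"

text \<open>Weak n-inner product. The value (x,y | x_n,...,x_2) is written f x y [x_n,...,x_2];
  the list of conditioning vectors has length n-1.\<close>
definition weak_n_inner :: "nat \<Rightarrow> ('a::real_vector \<Rightarrow> 'a \<Rightarrow> 'a list \<Rightarrow> real) \<Rightarrow> bool" where
  "weak_n_inner n f \<longleftrightarrow>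
    (\<forall>x zs. length zs = n - 1 \<longrightarrow>
        f x x zs \<ge> 0 \<and> (f x x zs = 0 \<longleftrightarrow> lin_dep_list (x # rev zs))) \<and>
    (\<forall>x z zs. length (z # zs) = n - 1 \<longrightarrow> f x x (z # zs) = f z z (x # zs)) \<and>
    (\<forall>x y zs. length zs = n - 1 \<longrightarrow> f x y zs = f y x zs) \<and>
    (\<forall>a x y zs. length zs = n - 1 \<longrightarrow> f (a *\<^sub>R x) y zs = a * f x y zs) \<and>
    (\<forall>x x' y zs. length zs = n - 1 \<longrightarrow> f (x + x') y zs = f x y zs + f x' y zs)"

definition coset :: "'a::real_vector set \<Rightarrow> 'a \<Rightarrow> 'a set" where
  "coset Y x = {u. u - x \<in> Y}"

definition quot :: "'a::real_vector set \<Rightarrow> 'a set set" where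
  "quot Y = range (coset Y)"

definition qadd :: "'a::real_vector set \<Rightarrow> 'a set \<Rightarrow> 'a set \<Rightarrow> 'a set" where
  "qadd Y A B = coset Y ((SOME a. a \<in> A) + (SOME b. b \<in> B))"

definition qscale :: "'a::real_vector set \<Rightarrow> real \<Rightarrow> 'a set \<Rightarrow> 'a set" where
  "qscale Y r A = coset Y (r *\<^sub>R (SOME a. a \<in> A))"

definition semi_inner_on ::
  "'v set \<Rightarrow> ('v \<Rightarrow> 'v \<Rightarrow> 'v) \<Rightarrow> (real \<Rightarrow> 'v \<Rightarrow> 'v) \<Rightarrow> ('v \<Rightarrow> 'v \<Rightarrow> real) \<Rightarrow> bool" where
  "semi_inner_on V add scl \<psi> \<longleftrightarrow>
    (\<forall>u\<in>V. \<forall>v\<in>V. \<psi> u v = \<psi> v u) \<and>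
    (\<forall>u\<in>V. \<forall>u'\<in>V. \<forall>v\<in>V. \<psi> (add u u') v = \<psi> u v + \<psi> u' v) \<and>
    (\<forall>a. \<forall>u\<in>V. \<forall>v\<in>V. \<psi> (scl a u) v = a * \<psi> u v) \<and>
    (\<forall>v\<in>V. \<psi> v v \<ge> 0)"

definition inner_prod_on ::
  "'v set \<Rightarrow> ('v \<Rightarrow> 'v \<Rightarrow> 'v) \<Rightarrow> (real \<Rightarrow> 'v \<Rightarrow> 'v) \<Rightarrow> 'v \<Rightarrow> ('v \<Rightarrow> 'v \<Rightarrow> real) \<Rightarrow> bool" where
  "inner_prod_on V add scl z \<psi> \<longleftrightarrow>
    semi_inner_on V add scl \<psi> \<and> (\<forall>v\<in>V. \<psi> v v = 0 \<longrightarrow> v = z)"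

end

theory Submission
  imports Defs
begin

text \<open>For fixed conditioning vectors \<open>x\<^sub>2, \<dots>, x\<^sub>n\<close>, the map \<open>(x, y) \<mapsto> (x, y | x\<^sub>n, \<dots>, x\<^sub>2)\<close> is
  a positive semidefinite symmetric bilinear form \<open>B\<close> on \<open>X\<close>. Its null vectors
  \<open>B w w = 0\<close> are orthogonal to everything, and by (P1) every vector of the span \<open>Y\<close> is
  such a null vector, so \<open>B\<close> descends to the quotient \<open>X/Y\<close>. If the \<open>x\<^sub>i\<close> are independent,
  (P1) says conversely that the null vectors are exactly the elements of \<open>Y\<close>, so the
  induced form is definite.\<close>

lemma semi_inner_on_UNIV_square_expand:
  fixes B :: "'a::real_vector \<Rightarrow> 'a \<Rightarrow> real"
  assumes "semi_inner_on UNIV (+) (*\<^sub>R) B"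
  shows "B (x + t *\<^sub>R y) (x + t *\<^sub>R y) = B x x + 2 * t * B x y + t\<^sup>2 * B y y"
proof -
  have sym: "\<And>u v. B u v = B v u"
    and add: "\<And>u u' v. B (u + u') v = B u v + B u' v"
    and scl: "\<And>a u v. B (a *\<^sub>R u) v = a * B u v"
    using assms unfolding semi_inner_on_def by auto
  have right_add: "B u (v + v') = B u v + B u v'" for u v v'
    by (metis add sym)
  have right_scl: "B u (a *\<^sub>R v) = a * B u v" for a u v
    by (metis scl sym)
  show ?thesis
    using sym[of y x]
    by (simp add: add scl right_add right_scl power2_eq_square algebra_simps)
qed

lemma semi_inner_on_UNIV_null_orthogonal:
  fixes B :: "'a::real_vector \<Rightarrow> 'a \<Rightarrow> real"
  assumes B: "semi_inner_on UNIV (+) (*\<^sub>R) B" and null: "B w w = 0"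
  shows "B w y = 0"
proof (rule ccontr)
  define a b where "a = B w y" and "b = B y y"
  assume "B w y \<noteq> 0"
  then have "a \<noteq> 0" by (simp add: a_def)
  have "b \<ge> 0" using B unfolding semi_inner_on_def b_def by blast
  \<comment> \<open>\<open>t = -a / (b + 1)\<close> makes \<open>2ta + t\<^sup>2b = a\<^sup>2 (-b - 2) / (b + 1)\<^sup>2\<close> negative.\<close>
  define t where "t = - a / (b + 1)"
  have "0 \<le> B (w + t *\<^sub>R y) (w + t *\<^sub>R y)"
    using B unfolding semi_inner_on_def by blast
  also have "\<dots> = 2 * t * a + t\<^sup>2 * b"
    using semi_inner_on_UNIV_square_expand[OF B] null by (simp add: a_def b_def)
  also have "\<dots> = a\<^sup>2 * (- b - 2) / (b + 1)\<^sup>2"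
    using \<open>b \<ge> 0\<close> unfolding t_def
    by (simp add: field_simps power2_eq_square add_nonneg_eq_0_iff)
  also have "\<dots> < 0"
    using \<open>a \<noteq> 0\<close> \<open>b \<ge> 0\<close> by (intro divide_neg_pos mult_pos_neg) auto
  finally show False by simp
qed

lemma weak_n_inner_semi_inner_on:
  assumes "weak_n_inner n f" and "length zs = n - 1"
  shows "semi_inner_on UNIV (+) (*\<^sub>R) (\<lambda>x y. f x y zs)"
  using assms unfolding weak_n_inner_def semi_inner_on_def by auto

lemma weak_n_inner_zero_iff:
  assumes "weak_n_inner n f" and "length zs = n - 1"
  shows "f x x zs = 0 \<longleftrightarrow> lin_dep_list (x # rev zs)"
  using assms unfolding weak_n_inner_def by blast

lemma in_span_list_combination:
  fixes vs :: "'a::real_vector list"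
  assumes "x \<in> span (set vs)"
  shows "\<exists>c. x = (\<Sum>i<length vs. c i *\<^sub>R vs ! i)"
  using assms
proof (induction vs arbitrary: x)
  case Nil
  then show ?case by simp
next
  case (Cons v vs)
  from Cons.prems obtain k where "x - k *\<^sub>R v \<in> span (set vs)"
    by (auto simp: span_insert)
  with Cons.IH obtain c where c: "x - k *\<^sub>R v = (\<Sum>i<length vs. c i *\<^sub>R vs ! i)"
    by blast
  define d where "d i = (case i of 0 \<Rightarrow> k | Suc j \<Rightarrow> c j)" for i
  have "(\<Sum>i<length (v # vs). d i *\<^sub>R (v # vs) ! i) = k *\<^sub>R v + (\<Sum>i<length vs. c i *\<^sub>R vs ! i)"
    unfolding length_Cons sum.lessThan_Suc_shift by (simp add: d_def)
  then show ?case
    using c by (intro exI[of _ d]) (simp add: algebra_simps)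
qed

lemma lin_dep_list_rev: "lin_dep_list (rev vs) \<longleftrightarrow> lin_dep_list vs"
proof -
  have rev_imp: "lin_dep_list ws" if dep: "lin_dep_list (rev ws)" for ws :: "'a list"
  proof -
    let ?L = "length ws"
    obtain c where nz: "\<exists>i<?L. c i \<noteq> 0" and sum: "(\<Sum>i<?L. c i *\<^sub>R rev ws ! i) = 0"
      using dep unfolding lin_dep_list_def length_rev by blast
    define d where "d j = c (?L - Suc j)" for j
    have "(\<Sum>i<?L. c i *\<^sub>R rev ws ! i) = (\<Sum>i<?L. d (?L - Suc i) *\<^sub>R ws ! (?L - Suc i))"
      by (intro sum.cong) (auto simp: d_def rev_nth Suc_diff_Suc)
    also have "\<dots> = (\<Sum>j<?L. d j *\<^sub>R ws ! j)"
      by (rule sum.nat_diff_reindex)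
    finally have "(\<Sum>j<?L. d j *\<^sub>R ws ! j) = 0" using sum by simp
    moreover from nz obtain i where "i < ?L" "c i \<noteq> 0" by blast
    then have "d (?L - Suc i) \<noteq> 0" by (simp add: d_def Suc_diff_Suc)
    ultimately show ?thesis
      unfolding lin_dep_list_def using \<open>i < ?L\<close> by (intro exI[of _ d] conjI exI[of _ "?L - Suc i"]) auto
  qed
  show ?thesis using rev_imp[of vs] rev_imp[of "rev vs"] by auto
qed

lemma lin_dep_list_Cons_if_in_span:
  fixes vs :: "'a::real_vector list"
  assumes "x \<in> span (set vs)"
  shows "lin_dep_list (x # vs)"
proof -
  obtain c where c: "x = (\<Sum>i<length vs. c i *\<^sub>R vs ! i)"
    using in_span_list_combination[OF assms] by blast
  define d where "d i = (case i of 0 \<Rightarrow> -1 | Suc j \<Rightarrow> c j)" for i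
  have "(\<Sum>i<length (x # vs). d i *\<^sub>R (x # vs) ! i) = - x + (\<Sum>i<length vs. c i *\<^sub>R vs ! i)"
    unfolding length_Cons sum.lessThan_Suc_shift by (simp add: d_def)
  also have "\<dots> = 0" using c by simp
  finally show ?thesis
    unfolding lin_dep_list_def by (intro exI[of _ d]) (auto simp: d_def)
qed

lemma in_span_if_lin_dep_list_Cons:
  fixes vs :: "'a::real_vector list"
  assumes dep: "lin_dep_list (x # vs)" and indep: "\<not> lin_dep_list vs"
  shows "x \<in> span (set vs)"
proof -
  obtain c where nz: "\<exists>i<Suc (length vs). c i \<noteq> 0"
    and sum: "c 0 *\<^sub>R x + (\<Sum>i<length vs. c (Suc i) *\<^sub>R vs ! i) = 0"
    using dep unfolding lin_dep_list_def length_Cons sum.lessThan_Suc_shift by auto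
  have "c 0 \<noteq> 0"
  proof
    assume "c 0 = 0"
    with nz obtain i where "i < length vs" "c (Suc i) \<noteq> 0"
      by (metis less_Suc_eq_0_disj)
    with sum \<open>c 0 = 0\<close> have "lin_dep_list vs"
      unfolding lin_dep_list_def by (intro exI[of _ "\<lambda>i. c (Suc i)"]) auto
    with indep show False ..
  qed
  have "x = (1 / c 0) *\<^sub>R (c 0 *\<^sub>R x)"
    using \<open>c 0 \<noteq> 0\<close> by simp
  also have "\<dots> = (- 1 / c 0) *\<^sub>R (\<Sum>i<length vs. c (Suc i) *\<^sub>R vs ! i)"
    using sum by (simp add: eq_neg_iff_add_eq_0[symmetric])
  also have "\<dots> \<in> span (set vs)"
    by (intro span_scale span_sum span_base) auto
  finally show ?thesis .
qed

definition quot_form :: "'a set \<Rightarrow> ('a \<Rightarrow> 'a \<Rightarrow> real) \<Rightarrow> 'a set \<Rightarrow> 'a set \<Rightarrow> real" where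
  "quot_form Y B A C = B (SOME a. a \<in> A) (SOME c. c \<in> C)"

lemma coset_self: "subspace Y \<Longrightarrow> x \<in> coset Y x"
  by (simp add: coset_def subspace_0)

lemma some_in_coset_diff:
  assumes "subspace Y"
  shows "(SOME a. a \<in> coset Y x) - x \<in> Y"
proof -
  have "(SOME a. a \<in> coset Y x) \<in> coset Y x"
    using coset_self[OF assms] by (rule someI)
  then show ?thesis by (simp add: coset_def)
qed

lemma coset_eq_zero_if_mem:
  assumes Y: "subspace Y" and "x \<in> Y"
  shows "coset Y x = coset Y 0"
proof -
  have "u - x \<in> Y \<longleftrightarrow> u \<in> Y" for u
    using subspace_diff[OF Y _ \<open>x \<in> Y\<close>, of u] subspace_add[OF Y _ \<open>x \<in> Y\<close>, of "u - x"]
    by auto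
  then show ?thesis by (simp add: coset_def)
qed

lemma form_eq_if_diffs_in:
  fixes B :: "'a::real_vector \<Rightarrow> 'a \<Rightarrow> real"
  assumes B: "semi_inner_on UNIV (+) (*\<^sub>R) B" and vanish: "\<And>w y. w \<in> Y \<Longrightarrow> B w y = 0"
    and "a - x \<in> Y" and "b - y \<in> Y"
  shows "B a b = B x y"
proof -
  have sym: "\<And>u v. B u v = B v u"
    and add: "\<And>u u' v. B (u + u') v = B u v + B u' v"
    using B unfolding semi_inner_on_def by auto
  have left: "B u v = B u' v" if "u - u' \<in> Y" for u u' v
    using add[of u' "u - u'" v] vanish[OF that] by simp
  have "B a b = B x b" using left[OF \<open>a - x \<in> Y\<close>] .
  also have "\<dots> = B b x" by (rule sym)
  also have "\<dots> = B y x" using left[OF \<open>b - y \<in> Y\<close>] .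
  also have "\<dots> = B x y" by (rule sym)
  finally show ?thesis .
qed

lemma quot_form_coset:
  fixes B :: "'a::real_vector \<Rightarrow> 'a \<Rightarrow> real"
  assumes "subspace Y" and "semi_inner_on UNIV (+) (*\<^sub>R) B" and "\<And>w y. w \<in> Y \<Longrightarrow> B w y = 0"
  shows "quot_form Y B (coset Y x) (coset Y y) = B x y"
  unfolding quot_form_def
  using assms(2,3) some_in_coset_diff[OF assms(1), of x] some_in_coset_diff[OF assms(1), of y]
  by (rule form_eq_if_diffs_in)

lemma semi_inner_on_quot_form:
  fixes B :: "'a::real_vector \<Rightarrow> 'a \<Rightarrow> real"
  assumes Y: "subspace Y" and B: "semi_inner_on UNIV (+) (*\<^sub>R) B"
    and vanish: "\<And>w y. w \<in> Y \<Longrightarrow> B w y = 0"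
  shows "semi_inner_on (quot Y) (qadd Y) (qscale Y) (quot_form Y B)"
proof -
  note on_cosets = quot_form_coset[OF Y B vanish]
  have sym: "\<And>u v. B u v = B v u"
    and add: "\<And>u u' v. B (u + u') v = B u v + B u' v"
    and scl: "\<And>r u v. B (r *\<^sub>R u) v = r * B u v"
    and pos: "\<And>v. B v v \<ge> 0"
    using B unfolding semi_inner_on_def by auto
  have representative: "B (SOME a. a \<in> coset Y x) y = B x y" for x y
    using form_eq_if_diffs_in[OF B vanish some_in_coset_diff[OF Y], of y y] subspace_0[OF Y]
    by simp
  have "quot_form Y B (qadd Y (coset Y x) (coset Y x')) (coset Y y) = B x y + B x' y"
    for x x' y
    by (simp add: qadd_def on_cosets add representative)
  moreover have "quot_form Y B (qscale Y r (coset Y x)) (coset Y y) = r * B x y" for r x y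
    by (simp add: qscale_def on_cosets scl representative)
  ultimately show ?thesis
    unfolding semi_inner_on_def quot_def by (auto simp: on_cosets sym pos)
qed

lemma inner_prod_on_quot_form:
  fixes B :: "'a::real_vector \<Rightarrow> 'a \<Rightarrow> real"
  assumes Y: "subspace Y" and B: "semi_inner_on UNIV (+) (*\<^sub>R) B"
    and vanish: "\<And>w y. w \<in> Y \<Longrightarrow> B w y = 0" and null: "\<And>x. B x x = 0 \<Longrightarrow> x \<in> Y"
  shows "inner_prod_on (quot Y) (qadd Y) (qscale Y) (coset Y 0) (quot_form Y B)"
  using semi_inner_on_quot_form[OF assms(1-3)] null coset_eq_zero_if_mem[OF Y]
  unfolding inner_prod_on_def quot_def by (auto simp: quot_form_coset[OF Y B vanish])

lemma weak_n_inner_vanish_on_span: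
  assumes W: "weak_n_inner n f" and L: "length zs = n - 1" and "w \<in> span (set zs)"
  shows "f w y zs = 0"
proof -
  have "lin_dep_list (w # rev zs)"
    using \<open>w \<in> span (set zs)\<close> by (intro lin_dep_list_Cons_if_in_span) simp
  then have "f w w zs = 0" by (simp add: weak_n_inner_zero_iff[OF W L])
  then show ?thesis
    by (rule semi_inner_on_UNIV_null_orthogonal[OF weak_n_inner_semi_inner_on[OF W L]])
qed

lemma weak_n_inner_null_in_span:
  assumes W: "weak_n_inner n f" and L: "length zs = n - 1"
    and indep: "\<not> lin_dep_list zs" and null: "f x x zs = 0"
  shows "x \<in> span (set zs)"
proof -
  have "x \<in> span (set (rev zs))"
    using null indep
    by (intro in_span_if_lin_dep_list_Cons) (simp_all add: weak_n_inner_zero_iff[OF W L] lin_dep_list_rev)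
  then show ?thesis by simp
qed

theorem theorem2p1:
  fixes f :: "'a::real_vector \<Rightarrow> 'a \<Rightarrow> 'a list \<Rightarrow> real"
    and n :: nat and xs :: "'a list"
  assumes "n \<ge> 2" and "weak_n_inner n f" and "length xs = n - 1"
  shows "\<exists>\<psi>. (\<forall>x y. \<psi> (coset (span (set xs)) x) (coset (span (set xs)) y) = f x y xs) \<and>
             semi_inner_on (quot (span (set xs))) (qadd (span (set xs))) (qscale (span (set xs))) \<psi> \<and>
             (\<not> lin_dep_list xs \<longrightarrow>
                inner_prod_on (quot (span (set xs))) (qadd (span (set xs))) (qscale (span (set xs)))
                  (coset (span (set xs)) 0) \<psi>)"
proof -
  define Y where "Y = span (set xs)"
  define B where "B x y = f x y xs" for x y
  have Y: "subspace Y" by (simp add: Y_def)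
  have B: "semi_inner_on UNIV (+) (*\<^sub>R) B"
    unfolding B_def using weak_n_inner_semi_inner_on assms(2,3) .
  have vanish: "\<And>w y. w \<in> Y \<Longrightarrow> B w y = 0"
    unfolding B_def Y_def using weak_n_inner_vanish_on_span assms(2,3) .
  have "\<not> lin_dep_list xs \<longrightarrow>
      inner_prod_on (quot Y) (qadd Y) (qscale Y) (coset Y 0) (quot_form Y B)"
    using inner_prod_on_quot_form[OF Y B vanish] weak_n_inner_null_in_span[OF assms(2,3)]
    unfolding B_def Y_def by blast
  moreover have "\<forall>x y. quot_form Y B (coset Y x) (coset Y y) = f x y xs"
    by (simp add: quot_form_coset[OF Y B vanish] B_def)
  ultimately show ?thesis
    unfolding Y_def[symmetric] using semi_inner_on_quot_form[OF Y B vanish] by blast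
qed

end
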